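(* Let $\mathcal D$ be a simply connected hyperbolic Riemann surface with boundary $\partial\mathcal D$, let $a\in\partial\mathcal D$, and let $\psi^{\mathbb H}:\mathcal D\to\mathbb H=\{\Im z>0\}$ be a chart with $\psi^{\mathbb H}(a)=0$. A semicomplete vector field $\delta$ on $\mathcal D$ is holomorphic in $\mathcal D$ and tangent to the boundary at every boundary point except $a$ if and only if $$\delta=\delta_{-2}\ell_{-2}+\delta_{-1}\ell_{-1}+\delta_0\ell_0+\delta_1\ell_1,\qquad \delta_{-1},\delta_0,\delta_1\in\mathbb R,\ \delta_{-2}\le 0,$$ i.e. $\delta^{\mathbb H}(z)=\frac{\delta_{-2}}{z}+\delta_{-1}+\delta_0z+\delta_1z^2$ in the half-plane chart.
   Context: A chart is a conformal map $\psi:\mathcal D\to D^\psi\subset\mathbb C$. A holomorphic vector field $v$ is a family of holomorphic functions $v^\psi$ on $D^\psi$, one for each chart, with $v^{\tilde\psi}(z)=v^\psi(\tau(z))/\tau'(z)$, $\tau=\psi\circ\tilde\psi^{-1}$. $\ell_n$ denotes the vector field with $\ell_n^{\mathbb H}(z)=z^{n+1}$ in the half-plane chart $\psi^{\mathbb H}$ (with $\psi^{\mathbb H}(a)=0$). For a vector field $v$, $H_t[v]$ is the solution of $\frac{d}{dt}H_t[v]=v\circ H_t[v]$, $H_0[v]=\mathrm{id}$. A holomorphic vector field $\delta$ is semicomplete if $H_t[\delta]$ exists for all $t\in[0,\infty)$ as a conformal map $\mathcal D\to\mathcal D\setminus K_t$ for some subsets $K_t\subset\mathcal D$ (i.e.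 a one-parameter semigroup of conformal self-maps of $\mathcal D$). *)

theory Defs
  imports "HOL-Complex_Analysis.Complex_Analysis"
begin

text \<open>Everything is expressed in the half-plane chart psi^H, which maps D
conformally onto the upper half-plane with the boundary point a sent to 0.
A holomorphic vector field v on D is then represented by its chart
function v^H, a holomorphic function on the upper half-plane.\<close>

definition upper_half :: "complex set" where
  "upper_half = {z. Im z > 0}"

definition ell :: "int \<Rightarrow> complex \<Rightarrow> complex" where
  "ell n z = z powi (n + 1)"

definition semicomplete_H :: "(complex \<Rightarrow> complex) \<Rightarrow> bool" where
  "semicomplete_H v \<longleftrightarrow>
     (\<exists>F :: real \<Rightarrow> complex \<Rightarrow> complex.
        (\<forall>z\<in>upper_half. F 0 z = z \<and>
           (\<forall>t\<ge>0. ((\<lambda>s. F s z) has_vector_derivative v (F t z)) (at t within {0..}))) \<and>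
        (\<forall>t\<ge>0. F t holomorphic_on upper_half \<and> inj_on (F t) upper_half \<and>
                F t ` upper_half \<subseteq> upper_half))"

text \<open>In the half-plane chart the boundary of D is the real line together
with the point at infinity, and a corresponds to 0.  At finite boundary points:
v^H extends holomorphically to an open neighbourhood of the closed half-plane
minus 0 and is real on the real axis (tangency).  At infinity we use the chart
w = -1/z, in which the field reads w^2 * v^H(-1/w); it must extend
holomorphically across w = 0 and be real on the real axis there.\<close>
definition holo_tangent_except_0 :: "(complex \<Rightarrow> complex) \<Rightarrow> bool" where
  "holo_tangent_except_0 v \<longleftrightarrow>
     (\<exists>U f. open U \<and> {z. Im z \<ge> 0} - {0} \<subseteq> U \<and> f holomorphic_on U \<and>
        (\<forall>z\<in>upper_half. f z = v z) \<and>
        (\<forall>x::real. x \<noteq> 0 \<longrightarrow> f (complex_of_real x) \<in> \<real>)) \<and>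
     (\<exists>r>0. \<exists>h. h holomorphic_on ball 0 r \<and>
        (\<forall>w\<in>ball 0 r. Im w > 0 \<longrightarrow> h w = w\<^sup>2 * v (- 1 / w)) \<and>
        (\<forall>x::real. \<bar>x\<bar> < r \<longrightarrow> h (complex_of_real x) \<in> \<real>))"

end

theory Submission
  imports Defs
begin

text \<open>
Conjugating by \<open>w = -1/z\<close> moves the exceptional boundary point to infinity: the field becomes
\<open>P w = w\<^sup>2 \<delta> (-1/w)\<close>, the generator of the semigroup \<open>\<phi>\<^sub>t w = -1 / H\<^sub>t (-1/w)\<close> of holomorphic
self-maps of the upper half-plane, and tangency says that \<open>P\<close> extends (Schwarz reflection plus
analytic continuation) to an entire function that is real on the real line.  Differentiating the
Schwarz-Pick inequality for \<open>\<phi>\<^sub>t\<close> at \<open>t = 0\<close> and letting one point tend to the boundary point 0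
gives \<open>Im (cnj u\<^sup>2 Q u) \<ge> 0\<close> on the upper half-plane, where \<open>Q u = P u - P 0 - P' 0 u\<close>, and the
reverse sign on the lower one by reflection.  Integrating against \<open>Im ((u/r)^m)\<close> over circles of
radius \<open>r\<close> bounds the Taylor coefficient of order \<open>m + 2\<close> by \<open>m\<close> times that of order 3 times
\<open>r^(1 - m)\<close>; letting \<open>r \<rightarrow> \<infinity>\<close>, \<open>P\<close> is a cubic whose leading coefficient is nonnegative, and
transforming back exhibits \<open>\<delta>\<close> as the stated combination of \<open>ell (-2), \<dots>, ell 1\<close>.
\<close>

section \<open>Schwarz-Pick lemma on the upper half-plane\<close>

definition cayley :: "complex \<Rightarrow> complex \<Rightarrow> complex" where
  "cayley a z = (z - a) / (z - cnj a)"

definition cayley_inv :: "complex \<Rightarrow> complex \<Rightarrow> complex" where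
  "cayley_inv a u = (a - cnj a * u) / (1 - u)"

lemma upper_half_iff: "z \<in> upper_half \<longleftrightarrow> Im z > 0"
  by (simp add: upper_half_def)

lemma cmod_diff_cnj_square:
  fixes a b :: complex
  shows "(cmod (b - a))\<^sup>2 = (cmod (b - cnj a))\<^sup>2 - 4 * Im a * Im b"
  unfolding cmod_power2 by (simp add: power2_eq_square algebra_simps)

lemma diff_cnj_neq_0: "a \<in> upper_half \<Longrightarrow> z \<in> upper_half \<Longrightarrow> z - cnj a \<noteq> 0"
  by (auto simp: upper_half_iff complex_eq_iff)

lemma norm_cayley_less_1:
  assumes "a \<in> upper_half" "z \<in> upper_half"
  shows "cmod (cayley a z) < 1"
proof -
  have "(cmod (z - a))\<^sup>2 < (cmod (z - cnj a))\<^sup>2"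
    using cmod_diff_cnj_square[of z a] assms by (simp add: upper_half_iff)
  then have "cmod (z - a) < cmod (z - cnj a)"
    using norm_ge_zero power2_less_imp_less by blast
  then show ?thesis
    using diff_cnj_neq_0[OF assms] by (simp add: cayley_def norm_divide divide_less_eq)
qed

lemma cayley_inv_in_upper_half:
  assumes "a \<in> upper_half" "cmod u < 1"
  shows "cayley_inv a u \<in> upper_half"
proof -
  have "u \<noteq> 1" using assms by auto
  then have "(1 - Re u)\<^sup>2 + (Im u)\<^sup>2 > 0"
    by (auto simp: complex_eq_iff sum_power2_gt_zero_iff)
  moreover have "(Re u)\<^sup>2 + (Im u)\<^sup>2 < 1"
    using assms(2) by (simp add: cmod_def)
  moreover have "Im (cayley_inv a u) = Im a * (1 - ((Re u)\<^sup>2 + (Im u)\<^sup>2)) / ((1 - Re u)\<^sup>2 + (Im u)\<^sup>2)"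
    by (simp add: cayley_inv_def Im_divide power2_eq_square algebra_simps)
  ultimately show ?thesis
    using assms(1) by (simp add: upper_half_iff)
qed

lemma cayley_inv_cayley:
  assumes "a \<in> upper_half" "z \<in> upper_half"
  shows "cayley_inv a (cayley a z) = z"
proof -
  have ne: "z - cnj a \<noteq> 0" "a - cnj a \<noteq> 0"
    using diff_cnj_neq_0 assms by blast+
  have "1 - cayley a z = (a - cnj a) / (z - cnj a)"
    and "a - cnj a * cayley a z = z * (a - cnj a) / (z - cnj a)"
    using ne by (simp_all add: cayley_def field_simps)
  then show ?thesis
    using ne by (simp add: cayley_inv_def)
qed

lemma Schwarz_Pick_upper_half:
  assumes holf: "f holomorphic_on upper_half" and fH: "f ` upper_half \<subseteq> upper_half"
    and z: "z \<in> upper_half" and w: "w \<in> upper_half"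
  shows "cmod (cayley (f w) (f z)) \<le> cmod (cayley w z)"
proof -
  define g where "g u = cayley (f w) (f (cayley_inv w u))" for u
  have inv_H: "cayley_inv w u \<in> upper_half" if "u \<in> ball 0 1" for u
    using cayley_inv_in_upper_half[OF w] that by simp
  have "cayley_inv w holomorphic_on ball 0 1"
    unfolding cayley_inv_def[abs_def] by (intro holomorphic_intros) auto
  then have "(f \<circ> cayley_inv w) holomorphic_on ball 0 1"
    by (rule holomorphic_on_compose_gen[OF _ holf]) (use inv_H in auto)
  moreover have "f (cayley_inv w u) - cnj (f w) \<noteq> 0" if "u \<in> ball 0 1" for u
    using diff_cnj_neq_0 fH inv_H[OF that] w by blast
  ultimately have "g holomorphic_on ball 0 1"
    unfolding g_def cayley_def by (intro holomorphic_intros) (auto simp: o_def)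
  moreover have "g 0 = 0"
    by (simp add: g_def cayley_def cayley_inv_def)
  moreover have "cmod (g u) < 1" if "cmod u < 1" for u
    unfolding g_def using fH w inv_H that by (intro norm_cayley_less_1) auto
  moreover have "cmod (cayley w z) < 1"
    by (rule norm_cayley_less_1[OF w z])
  ultimately have "cmod (g (cayley w z)) \<le> cmod (cayley w z)"
    by (rule Schwarz_Lemma(1))
  then show ?thesis
    by (simp add: g_def cayley_inv_cayley[OF w z])
qed

lemma norm_cayley_le_iff:
  assumes "z \<in> upper_half" "w \<in> upper_half" "z' \<in> upper_half" "w' \<in> upper_half"
  shows "cmod (cayley w' z') \<le> cmod (cayley w z) \<longleftrightarrow>
    Im z * Im w * (cmod (z' - cnj w'))\<^sup>2 \<le> Im z' * Im w' * (cmod (z - cnj w))\<^sup>2"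
proof -
  have pos: "cmod (z - cnj w) > 0" "cmod (z' - cnj w') > 0"
    using diff_cnj_neq_0 assms by auto
  have "cmod (cayley w' z') \<le> cmod (cayley w z) \<longleftrightarrow>
      cmod (z' - w') * cmod (z - cnj w) \<le> cmod (z - w) * cmod (z' - cnj w')"
    using pos by (simp add: cayley_def norm_divide divide_simps)
  also have "\<dots> \<longleftrightarrow> (cmod (z' - w') * cmod (z - cnj w))\<^sup>2 \<le> (cmod (z - w) * cmod (z' - cnj w'))\<^sup>2"
    by (simp add: abs_le_square_iff[symmetric] abs_mult)
  also have "\<dots> \<longleftrightarrow> Im z * Im w * (cmod (z' - cnj w'))\<^sup>2 \<le> Im z' * Im w' * (cmod (z - cnj w))\<^sup>2"
    unfolding power_mult_distrib cmod_diff_cnj_square[of z' w'] cmod_diff_cnj_square[of z w]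
    by (simp add: algebra_simps)
  finally show ?thesis .
qed

section \<open>Generators of semigroups of self-maps of the half-plane\<close>

text \<open>The derivative at \<open>t = 0\<close> of the Schwarz-Pick inequality
\<open>Im z Im w \<bar>\<phi>\<^sub>t z - cnj (\<phi>\<^sub>t w)\<bar>\<^sup>2 \<le> Im (\<phi>\<^sub>t z) Im (\<phi>\<^sub>t w) \<bar>z - cnj w\<bar>\<^sup>2\<close>
for a semigroup \<open>\<phi>\<^sub>t\<close> with generator \<open>G\<close>.\<close>
definition infinitesimal_Schwarz_Pick :: "(complex \<Rightarrow> complex) \<Rightarrow> bool" where
  "infinitesimal_Schwarz_Pick G \<longleftrightarrow> (\<forall>z\<in>upper_half. \<forall>w\<in>upper_half.
     2 * (Im z * Im w) * ((Re (G z) - Re (G w)) * (Re z - Re w) + (Im (G z) + Im (G w)) * (Im z + Im w))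
       \<le> (Im (G z) * Im w + Im z * Im (G w)) * ((Re z - Re w)\<^sup>2 + (Im z + Im w)\<^sup>2))"

lemma has_real_derivative_nonneg_at_right:
  fixes f :: "real \<Rightarrow> real"
  assumes "(f has_real_derivative D) (at 0 within {0..})" and "f 0 = 0"
    and "\<And>t. t \<ge> 0 \<Longrightarrow> f t \<ge> 0"
  shows "D \<ge> 0"
proof -
  have "((\<lambda>y. (f y - f 0) / (y - 0)) \<longlongrightarrow> D) (at_right 0)"
    using assms(1) unfolding has_field_derivative_iff at_within_Ici_at_right .
  moreover have "eventually (\<lambda>y. 0 \<le> (f y - f 0) / (y - 0)) (at_right 0)"
    using assms(2,3) by (auto simp: eventually_at_filter)
  ultimately show ?thesis
    by (rule tendsto_lowerbound) simp
qed

lemma semigroup_generator_infinitesimal_Schwarz_Pick: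
  fixes \<phi> :: "real \<Rightarrow> complex \<Rightarrow> complex"
  assumes hol: "\<And>t. t \<ge> 0 \<Longrightarrow> \<phi> t holomorphic_on upper_half"
    and into: "\<And>t. t \<ge> 0 \<Longrightarrow> \<phi> t ` upper_half \<subseteq> upper_half"
    and init: "\<And>z. z \<in> upper_half \<Longrightarrow> \<phi> 0 z = z"
    and der: "\<And>z. z \<in> upper_half \<Longrightarrow> ((\<lambda>t. \<phi> t z) has_vector_derivative G z) (at 0 within {0..})"
  shows "infinitesimal_Schwarz_Pick G"
  unfolding infinitesimal_Schwarz_Pick_def
proof (intro ballI)
  fix z w assume z: "z \<in> upper_half" and w: "w \<in> upper_half"
  define \<psi> where "\<psi> t = Im (\<phi> t z) * Im (\<phi> t w) * (cmod (z - cnj w))\<^sup>2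
    - Im z * Im w * (cmod (\<phi> t z - cnj (\<phi> t w)))\<^sup>2" for t
  have "\<psi> t \<ge> 0" if "t \<ge> 0" for t
    using Schwarz_Pick_upper_half[OF hol into z w, OF that that] into[OF that] z w
    by (subst (asm) norm_cayley_le_iff) (auto simp: \<psi>_def)
  moreover have "\<psi> 0 = 0"
    using init z w by (simp add: \<psi>_def)
  moreover have "(\<psi> has_real_derivative
      (Im (G z) * Im w + Im z * Im (G w)) * ((Re z - Re w)\<^sup>2 + (Im z + Im w)\<^sup>2)
      - Im z * Im w * (2 * (Re z - Re w) * (Re (G z) - Re (G w)) + 2 * (Im z + Im w) * (Im (G z) + Im (G w))))
      (at 0 within {0..})"
    unfolding \<psi>_def cmod_power2
    using der[OF z] der[OF w] init[OF z] init[OF w]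
    by (auto intro!: derivative_eq_intros) (simp add: algebra_simps)
  ultimately have "0 \<le> (Im (G z) * Im w + Im z * Im (G w)) * ((Re z - Re w)\<^sup>2 + (Im z + Im w)\<^sup>2)
      - Im z * Im w * (2 * (Re z - Re w) * (Re (G z) - Re (G w)) + 2 * (Im z + Im w) * (Im (G z) + Im (G w)))"
    using has_real_derivative_nonneg_at_right by blast
  then show "2 * (Im z * Im w) * ((Re (G z) - Re (G w)) * (Re z - Re w) + (Im (G z) + Im (G w)) * (Im z + Im w))
       \<le> (Im (G z) * Im w + Im z * Im (G w)) * ((Re z - Re w)\<^sup>2 + (Im z + Im w)\<^sup>2)"
    by (simp add: algebra_simps)
qed

lemma infinitesimal_Schwarz_Pick_boundary_point:
  assumes isp: "infinitesimal_Schwarz_Pick P" and dP: "(P has_field_derivative c) (at 0)"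
    and P0: "P 0 \<in> \<real>" and c: "c \<in> \<real>" and u: "Im u > 0"
  shows "0 \<le> Im (cnj u ^ 2 * (P u - P 0 - c * u))"
proof -
  define q where "q e = P (\<i> * of_real e)" for e :: real
  define x y where "x = Re u" and "y = Im u"
  have "((\<lambda>e. \<i> * of_real e) has_vector_derivative \<i>) (at 0)"
    by (auto intro!: derivative_eq_intros)
  from field_vector_diff_chain_at[OF this, of P c] dP
  have dq: "(q has_vector_derivative \<i> * c) (at 0)"
    by (simp add: q_def[abs_def] o_def)
  have "((\<lambda>e. (Im (q e) - Im (q 0)) / (e - 0)) \<longlongrightarrow> Im (\<i> * c)) (at 0)"
    using has_field_derivative_Im[OF dq] unfolding has_field_derivative_iff .
  then have slope: "((\<lambda>e. Im (q e) / e) \<longlongrightarrow> Re c) (at_right 0)"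
    using P0 by (auto simp: q_def complex_is_Real_iff intro: tendsto_mono[OF at_le])
  have "(q \<longlongrightarrow> q 0) (at_right 0)"
    using has_vector_derivative_continuous[OF dq] by (auto simp: isCont_def intro: tendsto_mono[OF at_le])
  then have cont: "(q \<longlongrightarrow> P 0) (at_right 0)"
    by (simp add: q_def)
  let ?L = "\<lambda>e. 2 * y * ((Re (P u) - Re (q e)) * x + (Im (P u) + Im (q e)) * (y + e))"
  let ?R = "\<lambda>e. (Im (P u) + y * (Im (q e) / e)) * (x\<^sup>2 + (y + e)\<^sup>2)"
  have "?L e \<le> ?R e" if e: "e > 0" for e
  proof -
    have "\<i> * of_real e \<in> upper_half" "u \<in> upper_half"
      using e u by (simp_all add: upper_half_iff)
    then have "e * ?L e \<le> e * ?R e"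
      using isp e unfolding infinitesimal_Schwarz_Pick_def
      by (fastforce simp: q_def x_def y_def algebra_simps)
    then show ?thesis
      using e by simp
  qed
  then have "eventually (\<lambda>e. ?L e \<le> ?R e) (at_right 0)"
    by (auto simp: eventually_at_filter)
  moreover have "(?L \<longlongrightarrow> 2 * y * ((Re (P u) - Re (P 0)) * x + (Im (P u) + Im (P 0)) * (y + 0))) (at_right 0)"
    by (intro tendsto_intros cont tendsto_ident_at)
  moreover have "(?R \<longlongrightarrow> (Im (P u) + y * Re c) * (x\<^sup>2 + (y + 0)\<^sup>2)) (at_right 0)"
    by (intro tendsto_intros slope tendsto_ident_at)
  ultimately have "2 * y * ((Re (P u) - Re (P 0)) * x + (Im (P u) + Im (P 0)) * y) \<le> (Im (P u) + y * Re c) * (x\<^sup>2 + y\<^sup>2)"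
    by (intro tendsto_le[of "at_right 0"]) auto
  moreover obtain p0 c' where "P 0 = of_real p0" "c = of_real c'"
    using P0 c by (auto elim!: Reals_cases)
  ultimately show ?thesis
    by (simp add: x_def y_def power2_eq_square algebra_simps)
qed

section \<open>Taylor coefficients on circles\<close>

lemma Taylor_coefficient_circlepath_integral:
  assumes holf: "f holomorphic_on cball 0 r" and r: "r > 0"
  shows "((\<lambda>t. f (circlepath 0 r t) / circlepath 0 r t ^ k) has_integral (deriv ^^ k) f 0 / fact k) {0..1}"
proof -
  have "((\<lambda>u. f u / (u - 0) ^ Suc k) has_contour_integral (2 * pi * \<i>) / fact k * (deriv ^^ k) f 0)
      (circlepath 0 r)"
    using holf r by (intro Cauchy_has_contour_integral_higher_derivative_circlepath)
      (auto intro: holomorphic_on_imp_continuous_on holomorphic_on_subset)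
  then have "((\<lambda>t. f (circlepath 0 r t) / circlepath 0 r t ^ Suc k * vector_derivative (circlepath 0 r) (at t within {0..1}))
      has_integral (2 * pi * \<i>) / fact k * (deriv ^^ k) f 0) {0..1}"
    unfolding has_contour_integral_def by simp
  moreover have "f (circlepath 0 r t) / circlepath 0 r t ^ Suc k * vector_derivative (circlepath 0 r) (at t within {0..1})
      = (2 * pi * \<i>) * (f (circlepath 0 r t) / circlepath 0 r t ^ k)" if "t \<in> {0..1}" for t
    using vector_derivative_circlepath01[of t 0 r] that r by (simp add: circlepath field_simps)
  ultimately have "((\<lambda>t. (2 * pi * \<i>) * (f (circlepath 0 r t) / circlepath 0 r t ^ k))
      has_integral (2 * pi * \<i>) / fact k * (deriv ^^ k) f 0) {0..1}"
    using has_integral_cong by (metis (no_types, lifting))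
  from has_integral_mult_right[OF this, of "1 / (2 * pi * \<i>)"] show ?thesis
    by (simp add: field_simps)
qed

lemma higher_deriv_real_at_real:
  fixes f :: "complex \<Rightarrow> complex"
  assumes holf: "f holomorphic_on UNIV" and real: "\<And>x. f (of_real x) \<in> \<real>"
  shows "(deriv ^^ n) f (of_real x) \<in> \<real>"
proof (induction n arbitrary: x)
  case 0
  then show ?case using real by simp
next
  case (Suc n)
  define g where "g = (deriv ^^ n) f"
  have "g holomorphic_on UNIV"
    unfolding g_def using holf by (rule holomorphic_higher_deriv) simp
  then have "(g has_field_derivative deriv g (of_real x)) (at (of_real x))"
    by (simp add: holomorphic_derivI)
  from field_vector_diff_chain_at[OF has_vector_derivative_of_real[OF DERIV_ident] this]
  have "((\<lambda>t. Im (g (of_real t))) has_real_derivative Im (deriv g (of_real x))) (at x)"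
    by (auto simp: o_def intro: has_field_derivative_Im)
  moreover have "(\<lambda>t. Im (g (of_real t))) = (\<lambda>t. 0)"
    using Suc.IH by (auto simp: g_def complex_is_Real_iff)
  ultimately have "Im (deriv g (of_real x)) = 0"
    using DERIV_const DERIV_unique by metis
  then show ?case
    by (simp add: g_def complex_is_Real_iff)
qed

lemma entire_cnj_if_real_on_real:
  fixes f :: "complex \<Rightarrow> complex"
  assumes holf: "f holomorphic_on UNIV" and real: "\<And>x. f (of_real x) \<in> \<real>"
  shows "f (cnj z) = cnj (f z)"
proof -
  have ps: "(\<lambda>n. (deriv ^^ n) f 0 / fact n * (u - 0) ^ n) sums f u" for u
    using holf by (intro holomorphic_power_series[of f 0 "cmod u + 1"]) (auto elim: holomorphic_on_subset)
  have "cnj ((deriv ^^ n) f 0) = (deriv ^^ n) f 0" for n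
    using higher_deriv_real_at_real[OF holf real, of n 0] by (simp add: Reals_cnj_iff)
  then have "(\<lambda>n. (deriv ^^ n) f 0 / fact n * (cnj z - 0) ^ n) sums cnj (f z)"
    using sums_cnj[THEN iffD2, OF ps[of z]] by simp
  then show ?thesis
    using ps[of "cnj z"] sums_unique2 by blast
qed

lemma abs_Im_power_le:
  fixes E :: complex
  assumes "cmod E = 1"
  shows "\<bar>Im (E ^ m)\<bar> \<le> real m * \<bar>Im E\<bar>"
proof (induction m)
  case 0
  then show ?case by simp
next
  case (Suc m)
  have Re_le: "\<bar>Re E\<bar> \<le> 1" "\<bar>Re (E ^ m)\<bar> \<le> 1"
    using abs_Re_le_cmod[of E] abs_Re_le_cmod[of "E ^ m"] assms by (simp_all add: norm_power)
  have "\<bar>Im (E ^ Suc m)\<bar> \<le> \<bar>Re E\<bar> * \<bar>Im (E ^ m)\<bar> + \<bar>Im E\<bar> * \<bar>Re (E ^ m)\<bar>"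
    by (simp add: abs_mult[symmetric] abs_triangle_ineq)
  also have "\<dots> \<le> 1 * \<bar>Im (E ^ m)\<bar> + \<bar>Im E\<bar> * 1"
    by (intro add_mono mult_mono) (use Re_le in auto)
  also have "\<dots> \<le> real (Suc m) * \<bar>Im E\<bar>"
    using Suc.IH by (simp add: algebra_simps)
  finally show ?case .
qed

lemma Im_cnj_square_mult_Im_power_on_circle:
  fixes g q :: complex
  assumes g: "cmod g = r" and r: "r > 0"
  shows "Im (cnj g ^ 2 * q) * Im ((g / of_real r) ^ m)
    = (r ^ (m + 4) * Re (q / g ^ (m + 2)) - r ^ 4 / r ^ m * Re (q * g ^ m / g ^ 2)) / 2"
proof -
  have nz: "g \<noteq> 0" using g r by auto
  have cg: "cnj g = of_real (r\<^sup>2) / g"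
    using nz g complex_norm_square[of g] by (simp add: field_simps)
  have cg2: "cnj g ^ 2 = of_real (r ^ 4) / g ^ 2"
    by (simp add: cg power_divide flip: power_mult of_real_power)
  have Im_mult_Im: "Im X * Im F = (Re (X * cnj F) - Re (X * F)) / 2" for X F :: complex
    by simp
  have cF: "cnj ((g / of_real r) ^ m) = (of_real r / g) ^ m"
    using nz r by (simp add: cg power2_eq_square)
  have X_cnj_F: "cnj g ^ 2 * q * cnj ((g / of_real r) ^ m) = of_real (r ^ (m + 4)) * (q / g ^ (m + 2))"
    unfolding cF cg2 using nz r by (simp add: power_divide power_add power2_eq_square field_simps)
  have X_F: "cnj g ^ 2 * q * (g / of_real r) ^ m = of_real (r ^ 4 / r ^ m) * (q * g ^ m / g ^ 2)"
    unfolding cg2 using nz r by (simp add: power_divide field_simps)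
  have Re_of_real_mult: "Re (of_real a * z) = a * Re z" for a and z :: complex
    by simp
  show ?thesis
    unfolding Im_mult_Im X_cnj_F X_F Re_of_real_mult ..
qed

lemma norm_circlepath_0: "r \<ge> 0 \<Longrightarrow> cmod (circlepath 0 r t) = r"
  by (simp add: circlepath norm_mult)

lemma circlepath_integral_Im_cnj_square_mult_Im_power:
  fixes Q :: "complex \<Rightarrow> complex"
  assumes holQ: "Q holomorphic_on UNIV" and Q0: "Q 0 = 0" and dQ0: "deriv Q 0 = 0"
    and r: "r > 0" and m: "m \<ge> 1"
  shows "((\<lambda>t. Im (cnj (circlepath 0 r t) ^ 2 * Q (circlepath 0 r t)) * Im ((circlepath 0 r t / of_real r) ^ m))
    has_integral r ^ (m + 4) * Re ((deriv ^^ (m + 2)) Q 0 / fact (m + 2)) / 2) {0..1}"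
proof -
  let ?\<gamma> = "circlepath 0 r"
  have \<gamma>_nz: "?\<gamma> t \<noteq> 0" for t
    using norm_circlepath_0[of r t] r by auto
  have A: "((\<lambda>t. Q (?\<gamma> t) / ?\<gamma> t ^ (m + 2)) has_integral (deriv ^^ (m + 2)) Q 0 / fact (m + 2)) {0..1}"
    using holQ r by (intro Taylor_coefficient_circlepath_integral) (auto elim: holomorphic_on_subset)
  define f where "f u = Q u * u ^ (m - 1)" for u
  have "(Q has_field_derivative 0) (at 0)"
    using holQ dQ0 by (metis UNIV_I holomorphic_derivI open_UNIV)
  then have "(f has_field_derivative 0) (at 0)"
    unfolding f_def[abs_def] using Q0 by (auto intro!: derivative_eq_intros)
  moreover have "f holomorphic_on cball 0 r"
    unfolding f_def[abs_def] using holQ by (auto intro!: holomorphic_intros elim: holomorphic_on_subset)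
  ultimately have "((\<lambda>t. f (?\<gamma> t) / ?\<gamma> t ^ 1) has_integral 0) {0..1}"
    using Taylor_coefficient_circlepath_integral[of f r 1] r by (simp add: DERIV_imp_deriv)
  moreover have "f (?\<gamma> t) / ?\<gamma> t ^ 1 = Q (?\<gamma> t) * ?\<gamma> t ^ m / ?\<gamma> t ^ 2" for t
    using \<gamma>_nz[of t] m by (simp add: f_def power_eq_if[of _ m] power2_eq_square)
  ultimately have B: "((\<lambda>t. Q (?\<gamma> t) * ?\<gamma> t ^ m / ?\<gamma> t ^ 2) has_integral 0) {0..1}"
    by simp
  have "((\<lambda>t. (r ^ (m + 4) * Re (Q (?\<gamma> t) / ?\<gamma> t ^ (m + 2))
        - r ^ 4 / r ^ m * Re (Q (?\<gamma> t) * ?\<gamma> t ^ m / ?\<gamma> t ^ 2)) / 2)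
      has_integral (r ^ (m + 4) * Re ((deriv ^^ (m + 2)) Q 0 / fact (m + 2)) - r ^ 4 / r ^ m * 0) / 2) {0..1}"
    by (intro has_integral_divide has_integral_diff has_integral_mult_right
        has_integral_linear[OF A bounded_linear_Re, unfolded o_def]
        has_integral_linear[OF B bounded_linear_Re, unfolded o_def, simplified])
  then show ?thesis
    by (simp only: Im_cnj_square_mult_Im_power_on_circle[OF norm_circlepath_0[OF less_imp_le[OF r]] r]
        mult_zero_right diff_zero)
qed

text \<open>Since \<open>Im (cnj u\<^sup>2 Q u)\<close> has the sign of \<open>Im u\<close>, the bound \<open>\<bar>Im (E ^ m)\<bar> \<le> m \<bar>Im E\<bar>\<close>
dominates the \<open>m\<close>-th circle integral by \<open>m\<close> times the first one.\<close>
lemma abs_Taylor_coefficient_le_if_Im_cnj_square_sign: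
  fixes Q :: "complex \<Rightarrow> complex"
  assumes holQ: "Q holomorphic_on UNIV" and Q0: "Q 0 = 0" and dQ0: "deriv Q 0 = 0"
    and pos: "\<And>u. Im u > 0 \<Longrightarrow> 0 \<le> Im (cnj u ^ 2 * Q u)"
    and neg: "\<And>u. Im u < 0 \<Longrightarrow> Im (cnj u ^ 2 * Q u) \<le> 0"
    and r: "r > 0" and m: "m \<ge> 1"
  shows "\<bar>Re ((deriv ^^ (m + 2)) Q 0 / fact (m + 2))\<bar> * r ^ (m - 1) \<le> real m * Re ((deriv ^^ 3) Q 0 / fact 3)"
proof -
  define a where "a k = Re ((deriv ^^ k) Q 0 / fact k)" for k
  define V where "V t = Im (cnj (circlepath 0 r t) ^ 2 * Q (circlepath 0 r t))" for t
  define S where "S j t = Im ((circlepath 0 r t / of_real r) ^ j)" for j t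
  have int: "((\<lambda>t. V t * S j t) has_integral r ^ (j + 4) * a (j + 2) / 2) {0..1}" if "j \<ge> 1" for j
    unfolding V_def S_def a_def by (rule circlepath_integral_Im_cnj_square_mult_Im_power) (use assms that in auto)
  have VS1: "0 \<le> V t * S 1 t" for t
  proof -
    have "0 \<le> V t * Im (circlepath 0 r t)"
      using pos neg
      by (cases "Im (circlepath 0 r t)" "0::real" rule: linorder_cases)
        (auto simp: V_def intro: mult_nonneg_nonneg mult_nonpos_nonpos)
    then show ?thesis
      using r by (simp add: S_def)
  qed
  have VSm: "\<bar>V t * S m t\<bar> \<le> real m * (V t * S 1 t)" for t
  proof -
    have "cmod (circlepath 0 r t / of_real r) = 1"
      using r by (simp add: norm_divide norm_circlepath_0)
    then have "\<bar>S m t\<bar> \<le> real m * \<bar>S 1 t\<bar>"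
      unfolding S_def by (metis abs_Im_power_le power_one_right)
    then have "\<bar>V t\<bar> * \<bar>S m t\<bar> \<le> \<bar>V t\<bar> * (real m * \<bar>S 1 t\<bar>)"
      by (rule mult_left_mono) simp
    also have "\<dots> = real m * (V t * S 1 t)"
      by (metis VS1 abs_mult abs_of_nonneg mult.left_commute)
    finally show ?thesis
      by (simp only: abs_mult)
  qed
  have "r ^ (m + 4) * a (m + 2) / 2 \<le> real m * (r ^ (1 + 4) * a (1 + 2) / 2)"
    using VSm m by (intro has_integral_le[OF int has_integral_mult_right[OF int]]) (auto dest: abs_le_D1)
  moreover have "- (r ^ (m + 4) * a (m + 2) / 2) \<le> real m * (r ^ (1 + 4) * a (1 + 2) / 2)"
    using VSm m by (intro has_integral_le[OF has_integral_neg[OF int] has_integral_mult_right[OF int]])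
      (auto dest: abs_le_D2)
  ultimately have "\<bar>a (m + 2)\<bar> * r ^ (m - 1) * r ^ 5 \<le> real m * a 3 * r ^ 5"
    using r m by (simp add: abs_mult numeral_3_eq_3 algebra_simps flip: power_add)
  then show ?thesis
    using r by (simp add: a_def)
qed

lemma eq_0_if_abs_mult_power_bounded:
  fixes a C :: real
  assumes bound: "\<And>r. r > 0 \<Longrightarrow> \<bar>a\<bar> * r ^ k \<le> C" and k: "k \<ge> 1"
  shows "a = 0"
proof (rule ccontr)
  assume "a \<noteq> 0"
  define r where "r = (\<bar>C\<bar> + 1) / \<bar>a\<bar> + 1"
  have r: "r \<ge> 1"
    using \<open>a \<noteq> 0\<close> by (simp add: r_def)
  have "\<bar>C\<bar> + 1 < \<bar>a\<bar> * r"
    using \<open>a \<noteq> 0\<close> by (simp add: r_def field_simps) (auto simp: zero_less_mult_iff)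
  also have "\<dots> \<le> \<bar>a\<bar> * r ^ k"
    using r k by (intro mult_left_mono) (auto simp: power_increasing[of 1 k r, simplified])
  also have "\<dots> \<le> C"
    using r by (intro bound) simp
  finally show False
    by simp
qed

lemma higher_deriv_diff_affine:
  fixes f :: "complex \<Rightarrow> complex"
  assumes "f holomorphic_on UNIV" and "k \<ge> 2"
  shows "(deriv ^^ k) (\<lambda>u. f u - a - b * u) z = (deriv ^^ k) f z"
proof -
  have "(deriv ^^ k) (\<lambda>u. f u - a - b * u) z = (deriv ^^ k) (\<lambda>u. f u - a) z - (deriv ^^ k) (\<lambda>u. b * u) z"
    using assms(1) by (intro higher_deriv_diff[where S = UNIV]) (auto intro: holomorphic_intros)
  also have "(deriv ^^ k) (\<lambda>u. f u - a) z = (deriv ^^ k) f z - (deriv ^^ k) (\<lambda>u. a) z"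
    using assms(1) by (intro higher_deriv_diff[where S = UNIV]) (auto intro: holomorphic_intros)
  finally show ?thesis
    using assms(2) by (simp add: higher_deriv_const higher_deriv_linear)
qed

lemma entire_eq_Taylor_polynomial:
  fixes f :: "complex \<Rightarrow> complex"
  assumes "f holomorphic_on UNIV" and "\<And>k. k \<ge> n \<Longrightarrow> (deriv ^^ k) f 0 = 0"
  shows "f z = (\<Sum>k<n. (deriv ^^ k) f 0 / fact k * z ^ k)"
proof -
  have "(\<lambda>k. (deriv ^^ k) f 0 / fact k * (z - 0) ^ k) sums f z"
    using assms(1) by (intro holomorphic_power_series[of f 0 "cmod z + 1"]) (auto elim: holomorphic_on_subset)
  moreover have "(\<lambda>k. (deriv ^^ k) f 0 / fact k * (z - 0) ^ k) sums (\<Sum>k<n. (deriv ^^ k) f 0 / fact k * (z - 0) ^ k)"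
    using assms(2) by (intro sums_finite) auto
  ultimately show ?thesis
    using sums_unique2 by fastforce
qed

lemma abs_Taylor_coefficient_le_if_infinitesimal_Schwarz_Pick:
  fixes P :: "complex \<Rightarrow> complex"
  assumes holP: "P holomorphic_on UNIV" and real: "\<And>x. P (of_real x) \<in> \<real>"
    and isp: "infinitesimal_Schwarz_Pick P" and "r > 0" and "m \<ge> 1"
  shows "\<bar>Re ((deriv ^^ (m + 2)) P 0 / fact (m + 2))\<bar> * r ^ (m - 1) \<le> real m * Re ((deriv ^^ 3) P 0 / fact 3)"
proof -
  define Q where "Q u = P u - P 0 - deriv P 0 * u" for u
  have P0: "P 0 \<in> \<real>" and dP0: "deriv P 0 \<in> \<real>"
    using higher_deriv_real_at_real[OF holP real, of 0 0] higher_deriv_real_at_real[OF holP real, of 1 0]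
    by simp_all
  have holQ: "Q holomorphic_on UNIV"
    unfolding Q_def[abs_def] by (intro holomorphic_intros holP)
  have dQ: "(Q has_field_derivative 0) (at 0)"
    unfolding Q_def[abs_def] using holP
    by (auto intro!: derivative_eq_intros holomorphic_derivI[of P UNIV])
  have Q_real: "Q (of_real x) \<in> \<real>" for x
    unfolding Q_def using real P0 dP0 by (intro Reals_diff Reals_mult) auto
  have pos: "0 \<le> Im (cnj u ^ 2 * Q u)" if "Im u > 0" for u
    unfolding Q_def using holP P0 dP0 that
    by (intro infinitesimal_Schwarz_Pick_boundary_point[OF isp]) (auto intro: holomorphic_derivI)
  have neg: "Im (cnj u ^ 2 * Q u) \<le> 0" if "Im u < 0" for u
  proof -
    have "Im (cnj u ^ 2 * Q u) = - Im (cnj (cnj u) ^ 2 * Q (cnj u))"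
      by (simp add: entire_cnj_if_real_on_real[OF holQ Q_real] power2_eq_square)
    then show ?thesis
      using pos[of "cnj u"] that by simp
  qed
  have "(deriv ^^ (m + 2)) Q 0 = (deriv ^^ (m + 2)) P 0" "(deriv ^^ 3) Q 0 = (deriv ^^ 3) P 0"
    unfolding Q_def[abs_def] by (rule higher_deriv_diff_affine[OF holP]; simp)+
  moreover have "Q 0 = 0"
    by (simp add: Q_def)
  ultimately show ?thesis
    using abs_Taylor_coefficient_le_if_Im_cnj_square_sign[OF holQ _ DERIV_imp_deriv[OF dQ] pos neg assms(4,5)]
    by (simp only:)
qed

lemma entire_cubic_if_infinitesimal_Schwarz_Pick:
  fixes P :: "complex \<Rightarrow> complex"
  assumes holP: "P holomorphic_on UNIV" and real: "\<And>x. P (of_real x) \<in> \<real>"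
    and isp: "infinitesimal_Schwarz_Pick P"
  shows "\<exists>c0 c1 c2 c3 :: real. 0 \<le> c3 \<and>
    (\<forall>w. P w = of_real c0 + of_real c1 * w + of_real c2 * w ^ 2 + of_real c3 * w ^ 3)"
proof -
  define c where "c k = (deriv ^^ k) P 0 / fact k" for k
  have c_eq: "c k = of_real (Re (c k))" for k
    using higher_deriv_real_at_real[OF holP real, of k 0]
    by (simp add: c_def complex_is_Real_iff complex_eq_iff)
  have coeff_bound: "\<bar>Re (c (m + 2))\<bar> * r ^ (m - 1) \<le> real m * Re (c 3)" if "r > 0" "m \<ge> 1" for r m
    unfolding c_def using holP real isp that by (rule abs_Taylor_coefficient_le_if_infinitesimal_Schwarz_Pick)
  have "c k = 0" if k: "k \<ge> 4" for k
  proof -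
    have "Re (c k) = 0"
    proof (rule eq_0_if_abs_mult_power_bounded)
      have eqs: "k - 2 + 2 = k" "k - 2 - 1 = k - 3" and "1 \<le> k - 2"
        using k by arith+
      show "\<bar>Re (c k)\<bar> * r ^ (k - 3) \<le> real (k - 2) * Re (c 3)" if "r > 0" for r
        using coeff_bound[OF that \<open>1 \<le> k - 2\<close>] unfolding eqs .
      show "1 \<le> k - 3"
        using k by arith
    qed
    then show ?thesis
      using c_eq[of k] by simp
  qed
  then have "P w = c 0 + c 1 * w + c 2 * w ^ 2 + c 3 * w ^ 3" for w
    using entire_eq_Taylor_polynomial[OF holP, of 4 w] by (simp add: c_def numeral_eq_Suc)
  moreover have "0 \<le> Re (c 3)"
    using coeff_bound[of 1 1] by simp
  ultimately have "0 \<le> Re (c 3) \<and> (\<forall>w. P w = of_real (Re (c 0)) + of_real (Re (c 1)) * w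
      + of_real (Re (c 2)) * w ^ 2 + of_real (Re (c 3)) * w ^ 3)"
    by (simp only: c_eq[symmetric]) blast
  then show ?thesis
    by blast
qed

section \<open>The vector field in the chart at the boundary point\<close>

lemma minus_inverse_in_upper_half: "w \<in> upper_half \<Longrightarrow> - 1 / w \<in> upper_half"
  by (simp add: upper_half_iff Im_divide divide_pos_pos sum_power2_gt_zero_iff del: divide_minus_left)

lemma Schwarz_reflection_punctured_plane:
  fixes f :: "complex \<Rightarrow> complex"
  assumes "open U" and "{z. Im z \<ge> 0} - {0} \<subseteq> U" and "f holomorphic_on U"
    and "\<And>x. x \<noteq> 0 \<Longrightarrow> f (of_real x) \<in> \<real>"
  obtains g where "g holomorphic_on - {0}" and "\<And>z. Im z \<ge> 0 \<Longrightarrow> g z = f z"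
proof
  have sub: "- {0} \<inter> {z. 0 \<le> Im z} \<subseteq> U"
    using assms(2) by auto
  show "(\<lambda>z. if 0 \<le> Im z then f z else cnj (f (cnj z))) holomorphic_on - {0}"
  proof (rule Schwarz_reflection)
    show "f holomorphic_on - {0} \<inter> {z. 0 < Im z}"
      using assms(3) by (rule holomorphic_on_subset) (use sub in auto)
    show "continuous_on (- {0} \<inter> {z. 0 \<le> Im z}) f"
      using holomorphic_on_imp_continuous_on[OF assms(3)] sub by (rule continuous_on_subset)
    show "f z \<in> \<real>" if "z \<in> - {0}" "z \<in> \<real>" for z
      using that assms(4) by (auto elim!: Reals_cases)
  qed (auto simp: open_Compl)
qed simp

lemma holomorphic_on_glue_punctured_plane_ball:
  assumes holk: "k holomorphic_on - {0}" and holh: "h holomorphic_on ball 0 r" and r: "r > 0"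
    and k_h: "\<And>w. w \<in> ball 0 r \<Longrightarrow> Im w > 0 \<Longrightarrow> k w = h w"
  shows "(\<lambda>w. if w = 0 then h 0 else k w) holomorphic_on UNIV"
proof -
  have k_h': "k w = h w" if "w \<in> ball 0 r - {0}" for w
  proof (rule analytic_continuation_open[of "ball 0 r \<inter> {z. Im z > 0}" "ball 0 r - {0}" k h])
    have "\<i> * of_real (r / 2) \<in> ball 0 r \<inter> {z. Im z > 0}"
      using r by (simp add: norm_mult)
    then show "ball 0 r \<inter> {z. Im z > 0} \<noteq> {}"
      by blast
    show "open (ball 0 r \<inter> {z. Im z > 0})"
      by (intro open_Int open_ball open_halfspace_Im_gt)
    show "connected (ball 0 r - {0::complex})"
      by (rule connected_punctured_ball) simp
    show "k holomorphic_on ball 0 r - {0}"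
      using holk by (rule holomorphic_on_subset) auto
    show "h holomorphic_on ball 0 r - {0}"
      using holh by (rule holomorphic_on_subset) auto
  qed (use that k_h in auto)
  have "(\<lambda>w. if w = 0 then h 0 else k w) holomorphic_on ball 0 r \<union> - {0}"
  proof (rule holomorphic_on_Un)
    show "(\<lambda>w. if w = 0 then h 0 else k w) holomorphic_on ball 0 r"
      using holh by (rule holomorphic_transform) (auto simp: k_h')
    show "(\<lambda>w. if w = 0 then h 0 else k w) holomorphic_on - {0}"
      using holk by (rule holomorphic_transform) auto
  qed (auto simp: open_Compl)
  moreover have "ball 0 r \<union> - {0::complex} = UNIV"
    using r by auto
  ultimately show ?thesis
    by (simp only:)
qed

lemma holo_tangent_except_0_entire_extension:
  assumes "holo_tangent_except_0 \<delta>"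
  obtains P where "P holomorphic_on UNIV" and "\<And>x. P (of_real x) \<in> \<real>"
    and "\<And>w. w \<in> upper_half \<Longrightarrow> P w = w\<^sup>2 * \<delta> (- 1 / w)"
proof -
  obtain U f where U: "open U" "{z. Im z \<ge> 0} - {0} \<subseteq> U" "f holomorphic_on U"
    and f_\<delta>: "\<And>z. z \<in> upper_half \<Longrightarrow> f z = \<delta> z" and f_real: "\<And>x. x \<noteq> 0 \<Longrightarrow> f (of_real x) \<in> \<real>"
    using assms unfolding holo_tangent_except_0_def by blast
  obtain g where holg: "g holomorphic_on - {0}" and g_f: "\<And>z. Im z \<ge> 0 \<Longrightarrow> g z = f z"
    using Schwarz_reflection_punctured_plane[OF U f_real] by blast
  obtain r h where r: "r > 0" and holh: "h holomorphic_on ball 0 r"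
    and h_\<delta>: "\<And>w. w \<in> ball 0 r \<Longrightarrow> Im w > 0 \<Longrightarrow> h w = w\<^sup>2 * \<delta> (- 1 / w)"
    and h_real: "\<And>x. \<bar>x\<bar> < r \<Longrightarrow> h (of_real x) \<in> \<real>"
    using assms unfolding holo_tangent_except_0_def by blast
  define k where "k w = w\<^sup>2 * g (- 1 / w)" for w
  have "(g \<circ> (\<lambda>w. - 1 / w)) holomorphic_on - {0}"
    by (intro holomorphic_on_compose_gen[OF _ holg] holomorphic_intros) auto
  then have holk: "k holomorphic_on - {0}"
    unfolding k_def[abs_def] by (intro holomorphic_intros) (auto simp: o_def)
  have k_\<delta>: "k w = w\<^sup>2 * \<delta> (- 1 / w)" if "w \<in> upper_half" for w
    using minus_inverse_in_upper_half[OF that] by (simp add: k_def g_f f_\<delta> less_imp_le upper_half_iff)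
  define P where "P w = (if w = 0 then h 0 else k w)" for w
  have "P holomorphic_on UNIV"
    unfolding P_def[abs_def] using holk holh r
    by (rule holomorphic_on_glue_punctured_plane_ball) (simp add: k_\<delta> h_\<delta> upper_half_iff)
  moreover have "P (of_real x) \<in> \<real>" for x
  proof (cases "x = 0")
    case True
    then show ?thesis using h_real[of 0] r by (simp add: P_def)
  next
    case False
    then have "f (of_real (- 1 / x)) \<in> \<real>"
      using f_real[of "- 1 / x"] by simp
    moreover have "P (of_real x) = of_real (x\<^sup>2) * f (of_real (- 1 / x))"
      using False by (simp add: P_def k_def g_f)
    ultimately show ?thesis
      by simp
  qed
  moreover have "P w = w\<^sup>2 * \<delta> (- 1 / w)" if "w \<in> upper_half" for w
    using that k_\<delta> by (auto simp: P_def upper_half_iff)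
  ultimately show ?thesis
    using that[of P] by metis
qed

lemma semicomplete_H_conjugate_infinitesimal_Schwarz_Pick:
  assumes "semicomplete_H \<delta>" and P_\<delta>: "\<And>w. w \<in> upper_half \<Longrightarrow> P w = w\<^sup>2 * \<delta> (- 1 / w)"
  shows "infinitesimal_Schwarz_Pick P"
proof -
  obtain F :: "real \<Rightarrow> complex \<Rightarrow> complex" where
    F0: "\<And>z. z \<in> upper_half \<Longrightarrow> F 0 z = z"
    and F_deriv: "\<And>z t. z \<in> upper_half \<Longrightarrow> t \<ge> 0 \<Longrightarrow>
      ((\<lambda>s. F s z) has_vector_derivative \<delta> (F t z)) (at t within {0..})"
    and F_hol: "\<And>t. t \<ge> 0 \<Longrightarrow> F t holomorphic_on upper_half"
    and F_into: "\<And>t. t \<ge> 0 \<Longrightarrow> F t ` upper_half \<subseteq> upper_half"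
    using assms(1) unfolding semicomplete_H_def by blast
  have nz: "z \<noteq> 0" if "z \<in> upper_half" for z
    using that by (auto simp: upper_half_iff)
  have inv_hol: "(\<lambda>w. - 1 / w) holomorphic_on upper_half"
    using nz by (auto intro!: holomorphic_intros)
  show ?thesis
  proof (rule semigroup_generator_infinitesimal_Schwarz_Pick[of "\<lambda>t w. - 1 / F t (- 1 / w)"])
    fix t :: real assume t: "t \<ge> 0"
    have "(F t \<circ> (\<lambda>w. - 1 / w)) holomorphic_on upper_half"
      by (rule holomorphic_on_compose_gen[OF inv_hol F_hol[OF t]]) (use minus_inverse_in_upper_half in blast)
    then have "((\<lambda>w. - 1 / w) \<circ> (F t \<circ> (\<lambda>w. - 1 / w))) holomorphic_on upper_half"
      by (rule holomorphic_on_compose_gen[OF _ inv_hol]) (use minus_inverse_in_upper_half F_into[OF t] in auto)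
    then show "(\<lambda>w. - 1 / F t (- 1 / w)) holomorphic_on upper_half"
      by (simp add: o_def)
    show "(\<lambda>w. - 1 / F t (- 1 / w)) ` upper_half \<subseteq> upper_half"
      using minus_inverse_in_upper_half F_into[OF t] by auto
  next
    fix w assume w: "w \<in> upper_half"
    then show "- 1 / F 0 (- 1 / w) = w"
      using F0[OF minus_inverse_in_upper_half[OF w]] nz[OF w] by simp
    define z where "z = - 1 / w"
    have z: "z \<in> upper_half"
      unfolding z_def using w by (rule minus_inverse_in_upper_half)
    have "((\<lambda>s. F s z) has_vector_derivative \<delta> z) (at 0 within {0..})"
      using F_deriv[OF z, of 0] F0[OF z] by simp
    moreover have "((\<lambda>u. - 1 / u) has_field_derivative 1 / z\<^sup>2) (at (F 0 z) within (\<lambda>s. F s z) ` {0..})"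
      using F0[OF z] nz[OF z] by (auto intro!: derivative_eq_intros simp: power2_eq_square)
    ultimately have "(((\<lambda>u. - 1 / u) \<circ> (\<lambda>s. F s z)) has_vector_derivative \<delta> z * (1 / z\<^sup>2)) (at 0 within {0..})"
      by (rule field_vector_diff_chain_within)
    moreover have "\<delta> z * (1 / z\<^sup>2) = P w"
      using P_\<delta>[OF w] nz[OF w] by (simp add: z_def power2_eq_square field_simps)
    ultimately show "((\<lambda>t. - 1 / F t (- 1 / w)) has_vector_derivative P w) (at 0 within {0..})"
      by (simp add: o_def z_def)
  qed
qed

lemma ell_simps [simp]:
  "ell (- 2) z = inverse z" "ell (- 1) z = 1" "ell 0 z = z" "ell 1 z = z\<^sup>2"
  by (simp_all add: ell_def power_int_minus)

lemma ell_combination_if_conjugate_cubic: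
  fixes c0 c1 c2 c3 :: real
  assumes P_\<delta>: "\<And>w. w \<in> upper_half \<Longrightarrow> P w = w\<^sup>2 * \<delta> (- 1 / w)"
    and P_eq: "\<And>w. P w = of_real c0 + of_real c1 * w + of_real c2 * w ^ 2 + of_real c3 * w ^ 3"
    and z: "z \<in> upper_half"
  shows "\<delta> z = of_real (- c3) * ell (- 2) z + of_real c2 * ell (- 1) z + of_real (- c1) * ell 0 z + of_real c0 * ell 1 z"
proof -
  have nz: "z \<noteq> 0"
    using z by (auto simp: upper_half_iff)
  have "P (- 1 / z) = \<delta> z / z\<^sup>2"
    using P_\<delta>[OF minus_inverse_in_upper_half[OF z]] nz by (simp add: power2_eq_square)
  then have "\<delta> z = z\<^sup>2 * P (- 1 / z)"
    using nz by (simp add: field_simps)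
  also have "\<dots> = of_real c0 * z\<^sup>2 - of_real c1 * z + of_real c2 - of_real c3 / z"
    using nz by (simp add: P_eq power2_eq_square power3_eq_cube field_simps)
  finally show ?thesis
    by (simp add: divide_inverse)
qed

lemma holo_tangent_except_0_ell_combination:
  fixes d2 d1 d0 d1' :: real
  assumes \<delta>_eq: "\<forall>z\<in>upper_half. \<delta> z = of_real d2 * ell (- 2) z + of_real d1 * ell (- 1) z
    + of_real d0 * ell 0 z + of_real d1' * ell 1 z"
  shows "holo_tangent_except_0 \<delta>"
  unfolding holo_tangent_except_0_def
proof (intro conjI exI)
  define f where "f z = of_real d2 / z + of_real d1 + of_real d0 * z + of_real d1' * z\<^sup>2" for z :: complex
  define h where "h w = - of_real d2 * w ^ 3 + of_real d1 * w\<^sup>2 - of_real d0 * w + of_real d1'" for w :: complex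
  have f_\<delta>: "f z = \<delta> z" if "z \<in> upper_half" for z
    using \<delta>_eq that by (simp add: f_def divide_inverse)
  show "open (- {0::complex})" "{z. 0 \<le> Im z} - {0} \<subseteq> - {0}"
    by auto
  show "f holomorphic_on - {0}"
    unfolding f_def by (intro holomorphic_intros) auto
  show "\<forall>z\<in>upper_half. f z = \<delta> z" "\<forall>x::real. x \<noteq> 0 \<longrightarrow> f (of_real x) \<in> \<real>"
    using f_\<delta> by (auto simp: f_def)
  show "(1::real) > 0" "h holomorphic_on ball 0 1" "\<forall>x::real. \<bar>x\<bar> < 1 \<longrightarrow> h (of_real x) \<in> \<real>"
    by (auto simp: h_def[abs_def] intro!: holomorphic_intros)
  show "\<forall>w\<in>ball 0 1. Im w > 0 \<longrightarrow> h w = w\<^sup>2 * \<delta> (- 1 / w)"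
  proof (intro ballI impI)
    fix w :: complex assume "Im w > 0"
    then have w: "w \<in> upper_half" "w \<noteq> 0"
      by (auto simp: upper_half_iff)
    then have "\<delta> (- 1 / w) = f (- 1 / w)"
      using f_\<delta>[OF minus_inverse_in_upper_half] by simp
    then show "h w = w\<^sup>2 * \<delta> (- 1 / w)"
      using w by (simp add: h_def f_def power2_eq_square power3_eq_cube field_simps)
  qed
qed

theorem mainTheorem1:
  fixes \<delta> :: "complex \<Rightarrow> complex"
  assumes "\<delta> holomorphic_on upper_half"
    and "semicomplete_H \<delta>"
  shows "holo_tangent_except_0 \<delta> \<longleftrightarrow>
    (\<exists>d2 d1 d0 d1' :: real. d2 \<le> 0 \<and>
       (\<forall>z\<in>upper_half. \<delta> z = of_real d2 * ell (-2) z + of_real d1 * ell (-1) z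
                          + of_real d0 * ell 0 z + of_real d1' * ell 1 z))"
proof
  assume "holo_tangent_except_0 \<delta>"
  then obtain P where holP: "P holomorphic_on UNIV" and P_real: "\<And>x. P (of_real x) \<in> \<real>"
    and P_\<delta>: "\<And>w. w \<in> upper_half \<Longrightarrow> P w = w\<^sup>2 * \<delta> (- 1 / w)"
    using holo_tangent_except_0_entire_extension by blast
  have "infinitesimal_Schwarz_Pick P"
    using assms(2) P_\<delta> by (rule semicomplete_H_conjugate_infinitesimal_Schwarz_Pick)
  then obtain c0 c1 c2 c3 :: real where c3: "0 \<le> c3"
    and P_eq: "\<And>w. P w = of_real c0 + of_real c1 * w + of_real c2 * w ^ 2 + of_real c3 * w ^ 3"
    using entire_cubic_if_infinitesimal_Schwarz_Pick[OF holP P_real] by blast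
  show "\<exists>d2 d1 d0 d1' :: real. d2 \<le> 0 \<and>
       (\<forall>z\<in>upper_half. \<delta> z = of_real d2 * ell (-2) z + of_real d1 * ell (-1) z
                          + of_real d0 * ell 0 z + of_real d1' * ell 1 z)"
    using c3 ell_combination_if_conjugate_cubic[OF P_\<delta> P_eq]
    by (intro exI[of _ "- c3"] exI[of _ c2] exI[of _ "- c1"] exI[of _ c0]) auto
qed (auto intro: holo_tangent_except_0_ell_combination)

end
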